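(* Consider the MSSN-MC-HC problem with costs $c_s>0$, $c_r>0$, and suppose $\frac{c_s}{c_r}\ge\overline{m}(\overline{m}+1)(h_{\max}-1)$ for some integer $\overline{m}$ with $1\le\overline{m}<m$, where $m=|Q|$. Then on every feasible instance, the approximation ratio of SmartSelect (cost of its output divided by the optimum cost) is at most $$\max\Big\{\epsilon+\frac{m}{\overline{m}},\ \frac{m}{2}\Big(1+\frac{1}{\overline{m}(\overline{m}+1)}\Big)\Big\},$$ where $\epsilon\in[0,1)$ is defined by $\lceil\frac{m}{\overline{m}+1}\rceil=\frac{m}{\overline{m}+1}+\epsilon$.
   Context: MSSN-MC-HC problem: given a finite undirected graph $G=(V,E)$ with $V=Q\cup R\cup B$ (pairwise disjoint; $Q$ = sources, $R$ = potential relay locations, $B$ = potential sink locations), costs $c_s$ per sink and $c_r$ per relay, and a positive integer $h_{\max}$, select $B'\subseteq B$, $R'\subseteq R$ such that in the subgraph induced by $Q\cup R'\cup B'$ every source has a path of at most $h_{\max}$ edges to some sink of $B'$ (a feasible solution), minimizing $c_s|B'|+c_r|R'|$. An instance is feasible if a feasible solution exists. SmartSelect algorithm: (1) If for some $b\in B$ every source has a path of at most $h_{\max}$ edges to $b$ in the subgraph induced by $Q\cup B$, output $(\{b\},\emptyset)$. (2) If some source has no path of at most $h_{\max}$ edges in $G$ to any sink, declare infeasible. (3) For each $b_i\in B$ let $Q_i$ be the set of sources whose shortest path to $b_i$ in $G$ has at most $h_{\max}$ edges, and $R_i$ the set of relays whose shortest path to $b_i$ has at most $h_{\max}-1$ edges.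 (4) Greedy phase, iterations $j=0,1,\dots$: $B^{(0)}=B$, $Q_i^{(0)}=Q_i$; $B^{(j)}$ is the set of sinks not yet picked and $Q_i^{(j)}$ the set of sources of $Q_i$ not yet covered. In iteration $j$, for each $b_i\in B^{(j)}$, a relay-selection subroutine (e.g. the SPTiRP algorithm) applied to the subgraph of $G$ induced by $Q_i^{(j)}\cup R_i\cup\{b_i\}$ returns a set $\hat R_i^{(j)}\subseteq R_i$ consisting of the relays on one chosen path of at most $h_{\max}$ edges from each source of $Q_i^{(j)}$ to $b_i$. Let $n_i^{(j)}$ be the number of relays in $\hat R_i^{(j)}$ not selected in earlier iterations (earlier-selected relays have cost zero thereafter), and $C_i^{(j)}=\frac{c_s+c_r n_i^{(j)}}{|Q_i^{(j)}|}$. The sink $b_i$ with least $C_i^{(j)}$ is picked (ties broken in favor of larger $|Q_i^{(j)}|$), its sources $Q_i^{(j)}$ become covered and the relays $\hat R_i^{(j)}$ are selected. Stop when all sources are covered; output the picked sinks and selected relays. *)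

theory Defs
  imports Complex_Main
begin

definition is_graph :: "'v set \<Rightarrow> 'v set set \<Rightarrow> bool" where
  "is_graph V E \<longleftrightarrow> finite V \<and>
     (\<forall>e\<in>E. \<exists>u w. u \<noteq> w \<and> u \<in> V \<and> w \<in> V \<and> e = {u, w})"

text \<open>A walk given as a nonempty vertex list inside the vertex set S, consecutive
  vertices adjacent; it has (length p - 1) edges.  A path of at most h edges
  exists iff a walk of at most h edges exists.\<close>

definition walk_in :: "'v set set \<Rightarrow> 'v set \<Rightarrow> 'v \<Rightarrow> 'v \<Rightarrow> 'v list \<Rightarrow> bool" where
  "walk_in E S u w p \<longleftrightarrow> p \<noteq> [] \<and> hd p = u \<and> last p = w \<and> set p \<subseteq> S \<and>
     (\<forall>i. i + 1 < length p \<longrightarrow> {p ! i, p ! (i + 1)} \<in> E)"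

definition reach_within :: "'v set set \<Rightarrow> 'v set \<Rightarrow> nat \<Rightarrow> 'v \<Rightarrow> 'v \<Rightarrow> bool" where
  "reach_within E S h u w \<longleftrightarrow> (\<exists>p. walk_in E S u w p \<and> length p \<le> h + 1)"

definition mssn_instance ::
  "'v set \<Rightarrow> 'v set set \<Rightarrow> 'v set \<Rightarrow> 'v set \<Rightarrow> 'v set \<Rightarrow> nat \<Rightarrow> bool" where
  "mssn_instance V E Q R B h \<longleftrightarrow> is_graph V E \<and> V = Q \<union> R \<union> B \<and>
     Q \<inter> R = {} \<and> Q \<inter> B = {} \<and> R \<inter> B = {} \<and> h > 0"

definition feasible_sol ::
  "'v set set \<Rightarrow> 'v set \<Rightarrow> 'v set \<Rightarrow> 'v set \<Rightarrow> nat \<Rightarrow> 'v set \<times> 'v set \<Rightarrow> bool" where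
  "feasible_sol E Q R B h sol \<longleftrightarrow> (case sol of (B', R') \<Rightarrow>
     B' \<subseteq> B \<and> R' \<subseteq> R \<and>
     (\<forall>q\<in>Q. \<exists>b\<in>B'. reach_within E (Q \<union> R' \<union> B') h q b))"

definition feasible_instance ::
  "'v set set \<Rightarrow> 'v set \<Rightarrow> 'v set \<Rightarrow> 'v set \<Rightarrow> nat \<Rightarrow> bool" where
  "feasible_instance E Q R B h \<longleftrightarrow> (\<exists>sol. feasible_sol E Q R B h sol)"

definition sol_cost :: "real \<Rightarrow> real \<Rightarrow> 'v set \<times> 'v set \<Rightarrow> real" where
  "sol_cost cs cr sol = cs * real (card (fst sol)) + cr * real (card (snd sol))"

definition opt_cost ::
  "real \<Rightarrow> real \<Rightarrow> 'v set set \<Rightarrow> 'v set \<Rightarrow> 'v set \<Rightarrow> 'v set \<Rightarrow> nat \<Rightarrow> real" where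
  "opt_cost cs cr E Q R B h = Min (sol_cost cs cr ` {sol. feasible_sol E Q R B h sol})"

text \<open>Step (3): Q_i and R_i for sink b (shortest paths in G = walks in V).\<close>

definition srcs_of :: "'v set \<Rightarrow> 'v set set \<Rightarrow> 'v set \<Rightarrow> nat \<Rightarrow> 'v \<Rightarrow> 'v set" where
  "srcs_of V E Q h b = {q \<in> Q. reach_within E V h q b}"

definition rels_of :: "'v set \<Rightarrow> 'v set set \<Rightarrow> 'v set \<Rightarrow> nat \<Rightarrow> 'v \<Rightarrow> 'v set" where
  "rels_of V E R h b = {r \<in> R. reach_within E V (h - 1) r b}"

definition valid_subroutine ::
  "'v set \<Rightarrow> 'v set set \<Rightarrow> 'v set \<Rightarrow> nat \<Rightarrow> 'v set \<Rightarrow> 'v \<Rightarrow> 'v set \<Rightarrow> bool" where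
  "valid_subroutine V E R h Qc b Rhat \<longleftrightarrow>
     (\<exists>pth. (\<forall>q\<in>Qc. walk_in E (Qc \<union> rels_of V E R h b \<union> {b}) q b (pth q) \<and>
                     length (pth q) \<le> h + 1) \<and>
            Rhat = (\<Union>q\<in>Qc. set (pth q)) \<inter> R)"

text \<open>State: (picked sinks, selected relays, covered sources).\<close>

definition greedy_step ::
  "real \<Rightarrow> real \<Rightarrow> 'v set \<Rightarrow> 'v set set \<Rightarrow> 'v set \<Rightarrow> 'v set \<Rightarrow> 'v set \<Rightarrow> nat \<Rightarrow>
   'v set \<times> 'v set \<times> 'v set \<Rightarrow> 'v set \<times> 'v set \<times> 'v set \<Rightarrow> bool" where
  "greedy_step cs cr V E Q R B h st st' \<longleftrightarrow>
    (case st of (P, Rs, C) \<Rightarrow>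
      (let Qc = (\<lambda>b. srcs_of V E Q h b - C);
           cand = {b \<in> B - P. Qc b \<noteq> {}}
       in C \<noteq> Q \<and>
          (\<exists>Rh b. (\<forall>b'\<in>cand. valid_subroutine V E R h (Qc b') b' (Rh b')) \<and>
             (let cst = (\<lambda>b'. (cs + cr * real (card (Rh b' - Rs))) / real (card (Qc b')))
              in b \<in> cand \<and>
                 (\<forall>b'\<in>cand. cst b \<le> cst b' \<and>
                    (cst b = cst b' \<longrightarrow> card (Qc b') \<le> card (Qc b))) \<and>
                 st' = (insert b P, Rs \<union> Rh b, C \<union> Qc b)))))"

text \<open>Possible outputs of SmartSelect (any subroutine output satisfying the
  specification, any remaining tie-breaking).  Step (2) never fires on feasible
  instances.\<close>

definition smart_select_output ::
  "real \<Rightarrow> real \<Rightarrow> 'v set \<Rightarrow> 'v set set \<Rightarrow> 'v set \<Rightarrow> 'v set \<Rightarrow> 'v set \<Rightarrow> nat \<Rightarrow>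
   'v set \<times> 'v set \<Rightarrow> bool" where
  "smart_select_output cs cr V E Q R B h out \<longleftrightarrow>
    (if (\<exists>b\<in>B. \<forall>q\<in>Q. reach_within E (Q \<union> B) h q b)
     then (\<exists>b\<in>B. (\<forall>q\<in>Q. reach_within E (Q \<union> B) h q b) \<and> out = ({b}, {}))
     else (\<exists>P Rs. (greedy_step cs cr V E Q R B h)\<^sup>*\<^sup>* ({}, {}, {}) (P, Rs, Q) \<and>
                 out = (P, Rs)))"

end

theory Submission
  imports Defs
begin

text \<open>Each greedy iteration adds at most h - 1 relays per newly covered source, so SmartSelect
  pays at most cs |P| + cr (h - 1) m \<le> cs |P| + cs m / (mbar (mbar + 1)), where P is the set of
  picked sinks and |P| \<le> m. If the optimum uses two or more sinks it costs at least 2 cs, which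
  gives the second bound. Otherwise a single sink reaches every source; as long as it is unpicked
  it is a candidate whose price undercuts every sink covering at most mbar uncovered sources, so
  every iteration but the last covers more than mbar sources. Hence |P| \<le> \<lceil>m / (mbar + 1)\<rceil>,
  and m / (mbar (mbar + 1)) = m / mbar - m / (mbar + 1) gives the first bound.\<close>

lemma walk_in_mono:
  assumes "walk_in E S u w p" "S \<subseteq> T"
  shows "walk_in E T u w p"
  using assms unfolding walk_in_def by (meson order_trans)

lemma reach_within_mono:
  assumes "reach_within E S h u w" "S \<subseteq> T"
  shows "reach_within E T h u w"
  using assms walk_in_mono unfolding reach_within_def by meson

lemma card_set_inter_le_if_ends_notin:
  assumes "p \<noteq> []" "hd p \<notin> A" "last p \<notin> A"
  shows "card (set p \<inter> A) \<le> length p - 2"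
proof -
  have "set p \<inter> A \<subseteq> set (butlast (tl p))"
  proof
    fix x assume x: "x \<in> set p \<inter> A"
    then have "x \<in> set (tl p)"
      using assms(1,2) by (cases p) auto
    moreover have "x \<noteq> last (tl p)"
      using x assms by (cases p) (auto split: if_splits)
    ultimately obtain ys y where "tl p = ys @ [y]" "x \<noteq> y"
      by (cases "tl p" rule: rev_cases) auto
    with \<open>x \<in> set (tl p)\<close> show "x \<in> set (butlast (tl p))" by simp
  qed
  then have "card (set p \<inter> A) \<le> card (set (butlast (tl p)))"
    by (simp add: card_mono)
  also have "\<dots> \<le> length p - 2"
    using card_length[of "butlast (tl p)"] by simp
  finally show ?thesis .
qed

lemma divide_mult_succ:
  fixes k a :: real
  assumes "k > 0"
  shows "a / (k * (k + 1)) = a / k - a / (k + 1)"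
  using assms by (simp add: field_simps)

lemma le_ceiling_divide_succ:
  fixes n m k :: nat
  assumes "n * (k + 1) \<le> m + k"
  shows "real n \<le> real_of_int \<lceil>real m / (real k + 1)\<rceil>"
proof -
  have "real (n * (k + 1)) \<le> real (m + k)"
    using assms by (simp only: of_nat_le_iff)
  then have "real n - 1 < real m / (real k + 1)"
    by (simp add: field_simps)
  then have "int n \<le> \<lceil>real m / (real k + 1)\<rceil>"
    by (simp add: le_ceiling_iff)
  then show ?thesis by linarith
qed

lemma divide_add_divide_mult_Suc_le:
  fixes c :: real and k u n :: nat
  assumes "c \<ge> 0" "1 \<le> k" "k < u" "k \<le> n"
  shows "c / real u + c / (real n * (real n + 1)) \<le> c / real k"
proof -
  have "1 / real u \<le> 1 / (real k + 1)"
    using assms by (simp add: frac_le)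
  moreover have "1 / (real n * (real n + 1)) \<le> 1 / (real k * (real k + 1))"
    using assms by (intro divide_left_mono mult_mono) auto
  ultimately have "1 / real u + 1 / (real n * (real n + 1)) \<le> 1 / real k"
    using divide_mult_succ[of "real k" 1] assms(2) by simp
  then have "c * (1 / real u + 1 / (real n * (real n + 1))) \<le> c * (1 / real k)"
    using assms(1) by (rule mult_left_mono)
  then show ?thesis by (simp add: field_simps)
qed

locale mssn =
  fixes V :: "'v set" and E :: "'v set set" and Q R B :: "'v set" and h :: nat
  assumes is_instance: "mssn_instance V E Q R B h"
begin

lemma finite_sets: "finite Q" "finite R" "finite B"
  using is_instance unfolding mssn_instance_def is_graph_def by auto

lemma disjoint: "Q \<inter> R = {}" "Q \<inter> B = {}" "R \<inter> B = {}"
  using is_instance unfolding mssn_instance_def by auto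

lemma vertices: "V = Q \<union> R \<union> B"
  using is_instance unfolding mssn_instance_def by auto

lemma h_pos: "h > 0"
  using is_instance unfolding mssn_instance_def by auto

abbreviation srcs :: "'v \<Rightarrow> 'v set" where
  "srcs \<equiv> srcs_of V E Q h"

abbreviation greedy_reachable :: "real \<Rightarrow> real \<Rightarrow> 'v set \<times> 'v set \<times> 'v set \<Rightarrow> bool" where
  "greedy_reachable cs cr st \<equiv> (greedy_step cs cr V E Q R B h)\<^sup>*\<^sup>* ({}, {}, {}) st"

lemma srcs_subset: "srcs b \<subseteq> Q"
  unfolding srcs_of_def by auto

lemma subroutine_relays:
  assumes "valid_subroutine V E R h Qc b Rhat" "Qc \<subseteq> Q" "b \<in> B"
  shows "Rhat \<subseteq> R" "card Rhat \<le> card Qc * (h - 1)"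
proof -
  obtain pth where pth: "\<And>q. q \<in> Qc \<Longrightarrow>
      walk_in E (Qc \<union> rels_of V E R h b \<union> {b}) q b (pth q) \<and> length (pth q) \<le> h + 1"
    and Rhat: "Rhat = (\<Union>q\<in>Qc. set (pth q) \<inter> R)"
    using assms(1) unfolding valid_subroutine_def by blast
  show "Rhat \<subseteq> R" using Rhat by auto
  have relays_on_path: "card (set (pth q) \<inter> R) \<le> h - 1" if "q \<in> Qc" for q
  proof -
    have "pth q \<noteq> []" "hd (pth q) \<notin> R" "last (pth q) \<notin> R"
      using pth[OF that] that assms(2,3) disjoint unfolding walk_in_def by auto
    then have "card (set (pth q) \<inter> R) \<le> length (pth q) - 2"
      by (rule card_set_inter_le_if_ends_notin)
    then show ?thesis using pth[OF that] by linarith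
  qed
  have "finite Qc" using assms(2) finite_sets finite_subset by blast
  then have "card Rhat \<le> (\<Sum>q\<in>Qc. card (set (pth q) \<inter> R))"
    unfolding Rhat by (rule card_UN_le)
  also have "\<dots> \<le> (\<Sum>q\<in>Qc. h - 1)"
    using relays_on_path by (rule sum_mono)
  finally show "card Rhat \<le> card Qc * (h - 1)" by simp
qed

definition sink_price :: "real \<Rightarrow> real \<Rightarrow> 'v set \<Rightarrow> 'v set \<Rightarrow> 'v set \<Rightarrow> 'v \<Rightarrow> real" where
  "sink_price cs cr Rs C Rhat b = (cs + cr * real (card (Rhat - Rs))) / real (card (srcs b - C))"

lemma sink_price_le:
  assumes "valid_subroutine V E R h (srcs b - C) b Rhat" "b \<in> B" "srcs b - C \<noteq> {}" "cr \<ge> 0"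
  shows "sink_price cs cr Rs C Rhat b \<le> cs / real (card (srcs b - C)) + cr * (real h - 1)"
proof -
  let ?U = "srcs b - C"
  have "?U \<subseteq> Q" using srcs_subset by blast
  then have "Rhat \<subseteq> R" and card_Rhat: "card Rhat \<le> card ?U * (h - 1)"
    using subroutine_relays assms(1,2) by auto
  have "finite Rhat" using \<open>Rhat \<subseteq> R\<close> finite_sets finite_subset by blast
  then have "card (Rhat - Rs) \<le> card ?U * (h - 1)"
    using card_Rhat card_mono[of Rhat "Rhat - Rs"] by auto
  then have "real (card (Rhat - Rs)) \<le> real (card ?U) * real (h - 1)"
    by (simp only: of_nat_le_iff flip: of_nat_mult)
  then have "real (card (Rhat - Rs)) \<le> real (card ?U) * (real h - 1)"
    using h_pos by (simp add: Suc_leI)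
  moreover have "real (card ?U) > 0"
    using assms(3) \<open>?U \<subseteq> Q\<close> finite_sets finite_subset by (fastforce simp: card_gt_0_iff)
  ultimately have "sink_price cs cr Rs C Rhat b \<le> (cs + cr * (real (card ?U) * (real h - 1))) / real (card ?U)"
    unfolding sink_price_def using assms(4)
    by (intro divide_right_mono add_left_mono mult_left_mono) auto
  also have "\<dots> = cs / real (card ?U) + cr * (real h - 1)"
    using \<open>real (card ?U) > 0\<close> by (simp add: field_simps)
  finally show ?thesis .
qed

lemma greedy_stepE:
  assumes "greedy_step cs cr V E Q R B h (P, Rs, C) st'"
  obtains Rh b where "C \<noteq> Q"
    "\<And>b'. b' \<in> B - P \<Longrightarrow> srcs b' - C \<noteq> {} \<Longrightarrow>
        valid_subroutine V E R h (srcs b' - C) b' (Rh b')"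
    "b \<in> B - P" "srcs b - C \<noteq> {}"
    "\<And>b'. b' \<in> B - P \<Longrightarrow> srcs b' - C \<noteq> {} \<Longrightarrow>
       sink_price cs cr Rs C (Rh b) b \<le> sink_price cs cr Rs C (Rh b') b' \<and>
       (sink_price cs cr Rs C (Rh b) b = sink_price cs cr Rs C (Rh b') b' \<longrightarrow>
          card (srcs b' - C) \<le> card (srcs b - C))"
    "st' = (insert b P, Rs \<union> Rh b, C \<union> srcs b)"
  using assms unfolding greedy_step_def Let_def
  by simp (elim conjE exE, rule that, auto simp: sink_price_def)

fun greedy_inv :: "'v set \<times> 'v set \<times> 'v set \<Rightarrow> bool" where
  "greedy_inv (P, Rs, C) \<longleftrightarrow> P \<subseteq> B \<and> C \<subseteq> Q \<and> card Rs \<le> (h - 1) * card C \<and>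
     card P \<le> card C \<and> (\<forall>b\<in>P. srcs b \<subseteq> C)"

lemma greedy_step_inv:
  assumes step: "greedy_step cs cr V E Q R B h (P, Rs, C) (P', Rs', C')"
    and inv: "greedy_inv (P, Rs, C)"
  shows "greedy_inv (P', Rs', C')" and "C \<noteq> Q" and "card P' = card P + 1"
    and "card C' = card C + card (C' - C)" and "card C < card C'"
proof -
  obtain Rh b where "C \<noteq> Q"
    and valid: "valid_subroutine V E R h (srcs b - C) b (Rh b)"
    and b: "b \<in> B - P" "srcs b - C \<noteq> {}"
    and st': "P' = insert b P" "Rs' = Rs \<union> Rh b" "C' = C \<union> (srcs b - C)"
    by (rule greedy_stepE[OF step]) auto
  let ?K = "srcs b - C"
  have "?K \<subseteq> Q" using srcs_subset by blast
  have "finite C" "finite ?K" "finite P"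
    using inv \<open>?K \<subseteq> Q\<close> finite_sets finite_subset by auto
  have card_C': "card C' = card C + card ?K"
    unfolding st' using \<open>finite C\<close> \<open>finite ?K\<close> by (intro card_Un_disjoint) auto
  have "card ?K \<ge> 1"
    using b(2) \<open>finite ?K\<close> by (simp add: Suc_leI card_gt_0_iff)
  have "card (Rh b) \<le> card ?K * (h - 1)"
    using subroutine_relays(2)[OF valid \<open>?K \<subseteq> Q\<close>] b(1) by blast
  then have "card Rs' \<le> (h - 1) * card C'"
    using inv card_Un_le[of Rs "Rh b"] unfolding st' card_C'[unfolded st']
    by (simp add: algebra_simps)
  moreover have "card P' = card P + 1"
    using b(1) \<open>finite P\<close> unfolding st' by simp
  ultimately show "greedy_inv (P', Rs', C')"
    using inv b \<open>?K \<subseteq> Q\<close> \<open>card ?K \<ge> 1\<close> card_C' unfolding st' by auto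
  show "C \<noteq> Q" "card P' = card P + 1" by fact+
  have "C' - C = ?K" unfolding st' by blast
  then show "card C' = card C + card (C' - C)" "card C < card C'"
    using card_C' \<open>card ?K \<ge> 1\<close> by simp_all
qed

lemmas rtranclp_induct3 =
  rtranclp_induct[of _ "(ax, ay, az)" "(bx, by, bz)", split_rule, consumes 1, case_names refl step]

lemma greedy_reachable_inv:
  assumes "greedy_reachable cs cr (P, Rs, C)"
  shows "greedy_inv (P, Rs, C)"
  using assms
proof (induction rule: rtranclp_induct3)
  case refl
  then show ?case by simp
next
  case (step P Rs C P' Rs' C')
  then show ?case by (blast intro: greedy_step_inv(1))
qed

text \<open>The universal sink bs remains a candidate that covers all uncovered sources, and a sink
  covering at most mbar of them cannot match its price: the relay cost of bs per source is at
  most cs / (mbar (mbar + 1)), which is the least possible gap between cs / k and cs / u for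
  k < u, k \<le> mbar. Ties go to bs.\<close>

lemma greedy_step_covers_many:
  assumes step: "greedy_step cs cr V E Q R B h (P, Rs, C) (P', Rs', C')"
    and inv: "greedy_inv (P, Rs, C)"
    and bs: "bs \<in> B" "srcs bs = Q"
    and price: "cr * (real h - 1) \<le> cs / (real mbar * (real mbar + 1))"
    and "cs \<ge> 0" "cr \<ge> 0" "C' \<noteq> Q"
  shows "card C + mbar + 1 \<le> card C'"
proof -
  obtain Rh b where "C \<noteq> Q"
    and valid: "\<And>b'. b' \<in> B - P \<Longrightarrow> srcs b' - C \<noteq> {} \<Longrightarrow>
        valid_subroutine V E R h (srcs b' - C) b' (Rh b')"
    and b: "b \<in> B - P" "srcs b - C \<noteq> {}"
    and choice: "\<And>b'. b' \<in> B - P \<Longrightarrow> srcs b' - C \<noteq> {} \<Longrightarrow>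
       sink_price cs cr Rs C (Rh b) b \<le> sink_price cs cr Rs C (Rh b') b' \<and>
       (sink_price cs cr Rs C (Rh b) b = sink_price cs cr Rs C (Rh b') b' \<longrightarrow>
          card (srcs b' - C) \<le> card (srcs b - C))"
    and C': "C' = C \<union> srcs b"
    by (rule greedy_stepE[OF step]) auto
  let ?K = "srcs b - C" and ?U = "srcs bs - C"
  have "C \<subseteq> Q" "\<forall>b\<in>P. srcs b \<subseteq> C" using inv by auto
  then have bs_cand: "bs \<in> B - P" "?U \<noteq> {}" using bs \<open>C \<noteq> Q\<close> by auto
  have "?K \<subset> ?U" using bs(2) srcs_subset[of b] \<open>C' \<noteq> Q\<close> \<open>C \<subseteq> Q\<close> unfolding C' by auto
  then have "card ?K < card ?U" using finite_sets bs(2) by (intro psubset_card_mono) auto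
  have "card ?K \<ge> 1"
    using b(2) finite_sets srcs_subset[of b] finite_subset
    by (metis Diff_subset One_nat_def Suc_leI card_gt_0_iff)
  have "mbar + 1 \<le> card ?K"
  proof (rule ccontr)
    assume "\<not> mbar + 1 \<le> card ?K"
    let ?M = "real mbar * (real mbar + 1)"
    have "card ?K \<le> mbar" using \<open>\<not> mbar + 1 \<le> card ?K\<close> by simp
    with \<open>cs \<ge> 0\<close> \<open>card ?K \<ge> 1\<close> \<open>card ?K < card ?U\<close>
    have "cs / card ?U + cs / ?M \<le> cs / card ?K"
      by (rule divide_add_divide_mult_Suc_le)
    moreover have "cs / card ?K \<le> sink_price cs cr Rs C (Rh b) b"
      unfolding sink_price_def using \<open>cr \<ge> 0\<close> by (intro divide_right_mono) auto
    moreover have "sink_price cs cr Rs C (Rh bs) bs \<le> cs / card ?U + cr * (real h - 1)"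
      using sink_price_le[OF valid[OF bs_cand] bs(1) bs_cand(2) \<open>cr \<ge> 0\<close>] .
    ultimately have "sink_price cs cr Rs C (Rh b) b = sink_price cs cr Rs C (Rh bs) bs"
      using choice[OF bs_cand] price by linarith
    then have "card ?U \<le> card ?K" using choice[OF bs_cand] by blast
    then show False using \<open>card ?K < card ?U\<close> by simp
  qed
  moreover have "C' - C = ?K" unfolding C' by blast
  ultimately show ?thesis using greedy_step_inv(4)[OF step inv] by simp
qed

lemma greedy_run_sinks_le:
  assumes "greedy_reachable cs cr (P, Rs, C)"
    and "bs \<in> B" "srcs bs = Q"
    and "cr * (real h - 1) \<le> cs / (real mbar * (real mbar + 1))"
    and "cs \<ge> 0" "cr \<ge> 0"
  shows "card P * (mbar + 1) \<le> card C + (if C = Q then mbar else 0)"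
  using assms(1)
proof (induction rule: rtranclp_induct3)
  case refl
  then show ?case by simp
next
  case (step P Rs C P' Rs' C')
  have inv: "greedy_inv (P, Rs, C)"
    using step.hyps(1) by (rule greedy_reachable_inv)
  note counts = greedy_step_inv[OF step.hyps(2) inv]
  have "card P * (mbar + 1) \<le> card C"
    using step.IH counts(2) by simp
  moreover have "C' \<noteq> Q \<Longrightarrow> card C + mbar + 1 \<le> card C'"
    using greedy_step_covers_many[OF step.hyps(2) inv assms(2-6)] .
  ultimately show ?case
    using counts(3,5) by (cases "C' = Q") (simp_all add: algebra_simps)
qed

lemma greedy_output_cost_le:
  assumes "greedy_reachable cs cr (P, Rs, Q)" "cr \<ge> 0"
  shows "sol_cost cs cr (P, Rs) \<le> cs * real (card P) + cr * (real h - 1) * real (card Q)"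
proof -
  have "card Rs \<le> (h - 1) * card Q"
    using greedy_reachable_inv[OF assms(1)] by simp
  then have "real (card Rs) \<le> real (h - 1) * real (card Q)"
    by (simp only: of_nat_le_iff flip: of_nat_mult)
  then have "real (card Rs) \<le> (real h - 1) * real (card Q)"
    using h_pos by (simp add: Suc_leI)
  then show ?thesis
    unfolding sol_cost_def using mult_left_mono[OF _ assms(2)] by (simp add: mult.assoc)
qed

lemma smart_select_cost_le:
  assumes out: "smart_select_output cs cr V E Q R B h out"
    and "cs \<ge> 0" "cr \<ge> 0" "1 \<le> k"
    and sinks: "\<And>P Rs. greedy_reachable cs cr (P, Rs, Q) \<Longrightarrow> real (card P) \<le> k"
  shows "sol_cost cs cr out \<le> cs * k + cr * (real h - 1) * real (card Q)"
proof (cases "\<exists>b\<in>B. \<forall>q\<in>Q. reach_within E (Q \<union> B) h q b")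
  case True
  then obtain b where "out = ({b}, {})"
    using out unfolding smart_select_output_def by auto
  then have "sol_cost cs cr out = cs" by (simp add: sol_cost_def)
  moreover have "cs \<le> cs * k" using \<open>cs \<ge> 0\<close> \<open>1 \<le> k\<close> by (simp add: mult_le_cancel_left1)
  moreover have "0 \<le> cr * (real h - 1) * real (card Q)" using \<open>cr \<ge> 0\<close> h_pos by simp
  ultimately show ?thesis by linarith
next
  case False
  then obtain P Rs where run: "greedy_reachable cs cr (P, Rs, Q)" and "out = (P, Rs)"
    using out unfolding smart_select_output_def by (auto simp only: if_False)
  then show ?thesis
    using greedy_output_cost_le[OF run \<open>cr \<ge> 0\<close>] mult_left_mono[OF sinks[OF run] \<open>cs \<ge> 0\<close>]
    by simp
qed

lemma opt_cost_attained:
  assumes "feasible_instance E Q R B h"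
  obtains Bs Rs where "feasible_sol E Q R B h (Bs, Rs)"
    and "opt_cost cs cr E Q R B h = sol_cost cs cr (Bs, Rs)"
proof -
  let ?F = "{sol. feasible_sol E Q R B h sol}"
  have "?F \<subseteq> Pow B \<times> Pow R" unfolding feasible_sol_def by auto
  then have "finite ?F" using finite_sets by (meson finite_Pow_iff finite_SigmaI finite_subset)
  moreover have "?F \<noteq> {}" using assms unfolding feasible_instance_def by auto
  ultimately have "opt_cost cs cr E Q R B h \<in> sol_cost cs cr ` ?F"
    unfolding opt_cost_def by (intro Min_in) auto
  then show ?thesis using that by auto
qed

lemma opt_cost_lower_bounds:
  assumes "feasible_instance E Q R B h" "Q \<noteq> {}" "cs \<ge> 0" "cr \<ge> 0"
  shows "cs \<le> opt_cost cs cr E Q R B h"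
    and "2 * cs \<le> opt_cost cs cr E Q R B h \<or> (\<exists>bs\<in>B. srcs bs = Q)"
proof -
  obtain Bs Rs where "feasible_sol E Q R B h (Bs, Rs)"
    and opt: "opt_cost cs cr E Q R B h = sol_cost cs cr (Bs, Rs)"
    using opt_cost_attained[OF assms(1)] .
  then have "Bs \<subseteq> B" "Rs \<subseteq> R"
    and cover: "\<forall>q\<in>Q. \<exists>b\<in>Bs. reach_within E (Q \<union> Rs \<union> Bs) h q b"
    unfolding feasible_sol_def by auto
  have "card Bs \<ge> 1"
    using cover assms(2) \<open>Bs \<subseteq> B\<close> finite_sets finite_subset
    by (metis One_nat_def Suc_leI card_gt_0_iff ex_in_conv)
  have opt_ge: "cs * real (card Bs) \<le> opt_cost cs cr E Q R B h"
    using opt assms(4) unfolding sol_cost_def by simp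
  then show "cs \<le> opt_cost cs cr E Q R B h"
    using mult_left_mono[of 1 "real (card Bs)" cs] \<open>card Bs \<ge> 1\<close> assms(3) by simp
  show "2 * cs \<le> opt_cost cs cr E Q R B h \<or> (\<exists>bs\<in>B. srcs bs = Q)"
  proof (cases "card Bs \<ge> 2")
    case True
    then show ?thesis
      using opt_ge mult_left_mono[of 2 "real (card Bs)" cs] assms(3) by (simp add: mult.commute)
  next
    case False
    then obtain bs where Bs: "Bs = {bs}"
      using \<open>card Bs \<ge> 1\<close> by (metis One_nat_def card_1_singletonE le_antisym not_less_eq_eq numeral_2_eq_2)
    have "Q \<union> Rs \<union> Bs \<subseteq> V" using vertices \<open>Bs \<subseteq> B\<close> \<open>Rs \<subseteq> R\<close> by auto
    then have "srcs bs = Q"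
      using cover reach_within_mono unfolding srcs_of_def Bs by fastforce
    then show ?thesis using Bs \<open>Bs \<subseteq> B\<close> by auto
  qed
qed

lemma smart_select_cost_le_card:
  assumes "smart_select_output cs cr V E Q R B h out" "Q \<noteq> {}" "cs \<ge> 0" "cr \<ge> 0"
  shows "sol_cost cs cr out \<le> cs * real (card Q) + cr * (real h - 1) * real (card Q)"
proof (rule smart_select_cost_le[OF assms(1,3,4)])
  show "1 \<le> real (card Q)"
    using assms(2) finite_sets by (simp add: Suc_leI card_gt_0_iff)
  show "real (card P) \<le> real (card Q)" if "greedy_reachable cs cr (P, Rs, Q)" for P Rs
    using greedy_reachable_inv[OF that] by simp
qed

lemma smart_select_cost_le_universal_sink:
  assumes "smart_select_output cs cr V E Q R B h out"
    and "bs \<in> B" "srcs bs = Q"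
    and "cr * (real h - 1) \<le> cs / (real mbar * (real mbar + 1))"
    and "cs \<ge> 0" "cr \<ge> 0" "Q \<noteq> {}"
  shows "sol_cost cs cr out \<le>
    cs * real_of_int \<lceil>real (card Q) / (real mbar + 1)\<rceil> + cr * (real h - 1) * real (card Q)"
proof (rule smart_select_cost_le[OF assms(1,5,6)])
  show "1 \<le> real_of_int \<lceil>real (card Q) / (real mbar + 1)\<rceil>"
    using assms(7) finite_sets by (simp add: card_gt_0_iff)
  show "real (card P) \<le> real_of_int \<lceil>real (card Q) / (real mbar + 1)\<rceil>"
    if "greedy_reachable cs cr (P, Rs, Q)" for P Rs
    using greedy_run_sinks_le[OF that assms(2-6)] by (intro le_ceiling_divide_succ) simp
qed

end

theorem theorem2:
  fixes V :: "'v set" and E :: "'v set set" and Q R B :: "'v set"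
    and h mbar :: nat and cs cr :: real and out :: "'v set \<times> 'v set"
  assumes "mssn_instance V E Q R B h"
    and "cs > 0" and "cr > 0"
    and "1 \<le> mbar" and "mbar < card Q"
    and "cs / cr \<ge> real mbar * (real mbar + 1) * (real h - 1)"
    and "feasible_instance E Q R B h"
    and "smart_select_output cs cr V E Q R B h out"
  shows "sol_cost cs cr out / opt_cost cs cr E Q R B h \<le>
    (let m = real (card Q);
         \<epsilon> = real_of_int \<lceil>m / (real mbar + 1)\<rceil> - m / (real mbar + 1)
     in max (\<epsilon> + m / real mbar) (m / 2 * (1 + 1 / (real mbar * (real mbar + 1)))))"
proof -
  interpret mssn V E Q R B h by (rule mssn.intro) fact
  define m where "m = real (card Q)"
  define M where "M = real mbar * (real mbar + 1)"
  define c where "c = real_of_int \<lceil>m / (real mbar + 1)\<rceil>"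
  define OPT where "OPT = opt_cost cs cr E Q R B h"
  define G where "G = max (c - m / (real mbar + 1) + m / real mbar) (m / 2 * (1 + 1 / M))"
  have "Q \<noteq> {}" "M > 0" "m \<ge> 0" "G \<ge> 0"
    using assms(4,5) by (auto simp: m_def M_def G_def le_max_iff_disj)
  have price: "cr * (real h - 1) \<le> cs / M"
    using assms(3,6) \<open>M > 0\<close> unfolding M_def by (simp add: field_simps)
  then have relays: "cr * (real h - 1) * m \<le> cs / M * m"
    using \<open>m \<ge> 0\<close> by (rule mult_right_mono)
  have "cs \<le> OPT" and "2 * cs \<le> OPT \<or> (\<exists>bs\<in>B. srcs bs = Q)"
    using opt_cost_lower_bounds[OF assms(7) \<open>Q \<noteq> {}\<close>] assms(2,3) unfolding OPT_def by auto
  then have "sol_cost cs cr out \<le> G * OPT"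
  proof (elim disjE bexE)
    assume "2 * cs \<le> OPT"
    have "sol_cost cs cr out \<le> cs * m + cs / M * m"
      using smart_select_cost_le_card[OF assms(8) \<open>Q \<noteq> {}\<close>] relays assms(2,3)
      unfolding m_def by fastforce
    also have "\<dots> = m / 2 * (1 + 1 / M) * (2 * cs)" by (simp add: field_simps)
    also have "\<dots> \<le> G * OPT"
      using \<open>2 * cs \<le> OPT\<close> assms(2) \<open>G \<ge> 0\<close> unfolding G_def by (intro mult_mono) auto
    finally show ?thesis .
  next
    fix bs assume "bs \<in> B" "srcs bs = Q"
    have "sol_cost cs cr out \<le> cs * c + cs / M * m"
      using smart_select_cost_le_universal_sink[OF assms(8) \<open>bs \<in> B\<close> \<open>srcs bs = Q\<close>, of mbar]
        price relays assms(2-4) \<open>Q \<noteq> {}\<close> unfolding c_def m_def M_def by fastforce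
    also have "\<dots> = (c + m / M) * cs" by (simp add: algebra_simps)
    also have "m / M = m / real mbar - m / (real mbar + 1)"
      unfolding M_def using assms(4) by (intro divide_mult_succ) simp
    also have "(c + (m / real mbar - m / (real mbar + 1))) * cs \<le> G * OPT"
      using \<open>cs \<le> OPT\<close> assms(2) \<open>G \<ge> 0\<close> unfolding G_def
      by (intro mult_mono) (auto simp: algebra_simps le_max_iff_disj)
    finally show ?thesis .
  qed
  then show ?thesis
    using \<open>cs \<le> OPT\<close> assms(2)
    unfolding Let_def G_def c_def m_def M_def OPT_def by (simp add: pos_divide_le_eq)
qed

end
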